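(* Let $1\le n\le N$, $E\in\mathbb R$, $\mathcal J\in\mathbb N$, let $\tilde C(n)>0$ be a constant depending only on $n$, let $l,L\ge1$ and let $\Lambda^{(n)}_L(\mathbf u)$ be an $n$-particle cube. Assume there exist $\mathcal J$ cubes $\Lambda^{(n)}_{\tilde C(n)l}(\mathbf k^{(1)}),\dots,\Lambda^{(n)}_{\tilde C(n)l}(\mathbf k^{(\mathcal J)})$ such that for every $\mathbf v\in\mathbb Z^{nd}$ not belonging to any of these cubes, $\Lambda^{(n)}_l(\mathbf v)$ is $(E,\tfrac12)$-NS. Then, if $l>2\tilde C(n)$, the cube $\Lambda^{(n)}_L(\mathbf u)$ can be decomposed into two disjoint subsets $\Lambda^{(n)}_L(\mathbf u)=B\cup G$ such that $B=\bigcup_j\Omega_j$ is a finite union with $\operatorname{diam}(\Omega_j)\le(2\mathcal J+1)l^2$ for each $j$ and $\operatorname{dist}(\Omega_j,\Omega_{j'})\ge l^2$ for $j\ne j'$, and for every $\mathbf v\in G$ the cube $\Lambda^{(n)}_l(\mathbf v)$ is $(E,\tfrac12)$-NS.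
   Context: Points of $\mathbb Z^{nd}$ are $\mathbf x=(x_1,\dots,x_n)$, $x_j\in\mathbb Z^d$, $\|x_j\|=\max_i|x_j^{(i)}|$, $\|\mathbf x\|=\max_j\|x_j\|$, $\langle\mathbf x\rangle=\max\{1,\|\mathbf x\|\}$; distances and diameters are taken in this max norm. Cubes $\Lambda^{(n)}_L(\mathbf u)=\{\mathbf x\in\mathbb Z^{nd}:\|\mathbf x-\mathbf u\|\le L\}$. The $n$-particle operator is $\mathbf H^{(n)}=\frac1g(\mathbf T+\mathbf U)+\mathbf V$ on $\ell^2(\mathbb Z^{nd})$ ($g\ne0$, $r>0$): $\mathbf T(\mathbf x,\mathbf y)=\langle y_j-x_j\rangle^{-r}$ if there is $j$ with $x_i=y_i$ for all $i\ne j$, else $0$; $\mathbf U(\mathbf x)=\sum_{j_1<j_2}U(x_{j_1},x_{j_2})$ with $U$ bounded symmetric, vanishing when $\|x-x'\|\ge\mathrm r_0$; $\mathbf V(\mathbf x)=\sum_jV(x_j)$ with real $V(x)$. $\mathbf H^{(n)}_\Lambda$ is the restriction to $\Lambda$ and $\mathbf G^{(n)}_\Lambda(E)=(\mathbf H^{(n)}_\Lambda-E)^{-1}$. Sobolev norm of a matrix $\mathcal M$ on $X\times Y$: $\|\mathcal M\|_s^2=C_0\sum_{\mathbf v\in X-Y}(\sup_{\mathbf x-\mathbf y=\mathbf v}|\mathcal M(\mathbf x,\mathbf y)|)^2\langle\mathbf v\rangle^{2s}$, $C_0=C_0(s_0^{(n)})>0$ fixed. With parameters $\tau_n\ge0$,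 $nd/2<s_0^{(n)}\le r_n<r-nd/2$, a cube $\Lambda^{(n)}_l(\mathbf v)$ is $(E,\tfrac12)$-NS if $\mathbf G^{(n)}_{\Lambda^{(n)}_l(\mathbf v)}(E)$ exists and $\|\mathbf G^{(n)}_{\Lambda^{(n)}_l(\mathbf v)}(E)\|_s\le l^{\tau_n+s/2}$ for all $s\in[s_0^{(n)},r_n]$. *)

theory Defs
  imports "HOL-Analysis.Analysis"
begin

text \<open>Points of Z^{nd}: x = (x_1,...,x_n), x_j in Z^d, encoded as (int^'d)^'n,
  with n = CARD('n), d = CARD('d).\<close>

type_synonym ('d,'n) pt = "((int, 'd) vec, 'n) vec"

definition onorm :: "int ^ 'd \<Rightarrow> real" where
  "onorm y = of_int (Max (range (\<lambda>i. \<bar>y $ i\<bar>)))"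

definition mnorm :: "('d::finite,'n::finite) pt \<Rightarrow> real" where
  "mnorm x = Max (range (\<lambda>j. onorm (x $ j)))"

definition obr :: "int ^ 'd \<Rightarrow> real" where
  "obr y = max 1 (onorm y)"

definition mbr :: "('d::finite,'n::finite) pt \<Rightarrow> real" where
  "mbr x = max 1 (mnorm x)"

definition pdist :: "('d::finite,'n::finite) pt \<Rightarrow> ('d,'n) pt \<Rightarrow> real" where
  "pdist x y = mnorm (x - y)"

definition cube :: "real \<Rightarrow> ('d::finite,'n::finite) pt \<Rightarrow> ('d,'n) pt set" where
  "cube L u = {x. pdist x u \<le> L}"

definition sdiam :: "('d::finite,'n::finite) pt set \<Rightarrow> real" where
  "sdiam A = (SUP p\<in>A \<times> A. pdist (fst p) (snd p))"

definition sdist :: "('d::finite,'n::finite) pt set \<Rightarrow> ('d,'n) pt set \<Rightarrow> real" where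
  "sdist A B = (INF p\<in>A \<times> B. pdist (fst p) (snd p))"

definition Tker :: "real \<Rightarrow> ('d::finite,'n::finite) pt \<Rightarrow> ('d,'n) pt \<Rightarrow> real" where
  "Tker r x y = (if (\<exists>j. \<forall>i. i \<noteq> j \<longrightarrow> x $ i = y $ i)
      then (let j = (SOME j. \<forall>i. i \<noteq> j \<longrightarrow> x $ i = y $ i) in obr (y $ j - x $ j) powr (- r))
      else 0)"

definition Upot :: "(int ^ 'd \<Rightarrow> int ^ 'd \<Rightarrow> real) \<Rightarrow> ('d::finite,'n::{finite,linorder}) pt \<Rightarrow> real" where
  "Upot U x = (\<Sum>j1\<in>UNIV. \<Sum>j2\<in>{j. j1 < j}. U (x $ j1) (x $ j2))"

definition Vpot :: "(int ^ 'd \<Rightarrow> real) \<Rightarrow> ('d::finite,'n::finite) pt \<Rightarrow> real" where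
  "Vpot V x = (\<Sum>j\<in>UNIV. V (x $ j))"

definition Hmat :: "real \<Rightarrow> real \<Rightarrow> (int ^ 'd \<Rightarrow> int ^ 'd \<Rightarrow> real) \<Rightarrow> (int ^ 'd \<Rightarrow> real)
    \<Rightarrow> ('d::finite,'n::{finite,linorder}) pt \<Rightarrow> ('d,'n) pt \<Rightarrow> real" where
  "Hmat g r U V x y = (1 / g) * (Tker r x y + (if x = y then Upot U x else 0))
      + (if x = y then Vpot V x else 0)"

definition is_green :: "(('d::finite,'n::finite) pt \<Rightarrow> ('d,'n) pt \<Rightarrow> real) \<Rightarrow> ('d,'n) pt set \<Rightarrow> real
    \<Rightarrow> (('d,'n) pt \<Rightarrow> ('d,'n) pt \<Rightarrow> real) \<Rightarrow> bool" where
  "is_green H Lam E G \<longleftrightarrow>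
     (\<forall>x\<in>Lam. \<forall>y\<in>Lam. (\<Sum>z\<in>Lam. (H x z - (if x = z then E else 0)) * G z y) = (if x = y then 1 else 0))
   \<and> (\<forall>x\<in>Lam. \<forall>y\<in>Lam. (\<Sum>z\<in>Lam. G x z * (H z y - (if z = y then E else 0))) = (if x = y then 1 else 0))"

definition green_exists :: "(('d::finite,'n::finite) pt \<Rightarrow> ('d,'n) pt \<Rightarrow> real) \<Rightarrow> ('d,'n) pt set \<Rightarrow> real \<Rightarrow> bool" where
  "green_exists H Lam E \<longleftrightarrow> (\<exists>G. is_green H Lam E G)"

definition green :: "(('d::finite,'n::finite) pt \<Rightarrow> ('d,'n) pt \<Rightarrow> real) \<Rightarrow> ('d,'n) pt set \<Rightarrow> real
    \<Rightarrow> ('d,'n) pt \<Rightarrow> ('d,'n) pt \<Rightarrow> real" where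
  "green H Lam E = (\<lambda>x y. if x \<in> Lam \<and> y \<in> Lam then (SOME G. is_green H Lam E G) x y else 0)"

definition sobnorm :: "real \<Rightarrow> real \<Rightarrow> ('d::finite,'n::finite) pt set \<Rightarrow> ('d,'n) pt set
    \<Rightarrow> (('d,'n) pt \<Rightarrow> ('d,'n) pt \<Rightarrow> real) \<Rightarrow> real" where
  "sobnorm C0 s X Y M = sqrt (C0 * (\<Sum>v\<in>{x - y | x y. x \<in> X \<and> y \<in> Y}.
      (SUP p\<in>{(x, y). x \<in> X \<and> y \<in> Y \<and> x - y = v}. \<bar>M (fst p) (snd p)\<bar>)\<^sup>2 * mbr v powr (2 * s)))"

definition NS :: "real \<Rightarrow> real \<Rightarrow> (int ^ 'd \<Rightarrow> int ^ 'd \<Rightarrow> real) \<Rightarrow> (int ^ 'd \<Rightarrow> real)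
    \<Rightarrow> real \<Rightarrow> real \<Rightarrow> real \<Rightarrow> real \<Rightarrow> real \<Rightarrow> real \<Rightarrow> ('d::finite,'n::{finite,linorder}) pt \<Rightarrow> bool" where
  "NS g r U V C0 tau s0 rn E l v \<longleftrightarrow>
     green_exists (Hmat g r U V) (cube l v) E \<and>
     (\<forall>s. s0 \<le> s \<and> s \<le> rn \<longrightarrow>
        sobnorm C0 s (cube l v) (cube l v) (green (Hmat g r U V) (cube l v) E) \<le> l powr (tau + s / 2))"

end

theory Submission
  imports Defs "HOL-Library.Transitive_Closure_Table"
begin

text \<open>Only the geometry of the bad region matters. Each of the \<open>J\<close> bad cubes
  meets \<open>\<Lambda>\<^sub>L(u)\<close> in a set of diameter at most \<open>2 C l \<le> l\<^sup>2\<close>. Group these sets into the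
  connected components of the relation ``at distance \<open>< l\<^sup>2\<close>''. Distinct components are
  \<open>l\<^sup>2\<close>-separated by construction, and any two points of one component are joined by a chain
  through at most \<open>J\<close> of the sets, each link costing at most \<open>l\<^sup>2\<close>, whence the diameter bound.
  Every centre outside the components lies outside all bad cubes, so its cube is NS.\<close>

lemma onorm_attained: "\<exists>i. onorm y = of_int \<bar>y $ i\<bar>"
proof -
  have "Max (range (\<lambda>i. \<bar>y $ i\<bar>)) \<in> range (\<lambda>i. \<bar>y $ i\<bar>)"
    by (rule Max_in) auto
  then show ?thesis unfolding onorm_def by (metis rangeE)
qed

lemma abs_component_le_onorm: "of_int \<bar>y $ i\<bar> \<le> onorm y"
proof -
  have "\<bar>y $ i\<bar> \<le> Max (range (\<lambda>i. \<bar>y $ i\<bar>))"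
    by (rule Max_ge) auto
  then show ?thesis unfolding onorm_def by linarith
qed

lemma onorm_add_le: "onorm (a + b) \<le> onorm a + onorm b"
proof -
  obtain i where "onorm (a + b) = of_int \<bar>a $ i + b $ i\<bar>"
    using onorm_attained[of "a + b"] by auto
  also have "\<dots> \<le> of_int \<bar>a $ i\<bar> + of_int \<bar>b $ i\<bar>"
    by linarith
  also have "\<dots> \<le> onorm a + onorm b"
    using abs_component_le_onorm[of a i] abs_component_le_onorm[of b i] by linarith
  finally show ?thesis .
qed

lemma onorm_uminus: "onorm (- a) = onorm a"
  unfolding onorm_def by simp

lemma mnorm_attained: "\<exists>j. mnorm x = onorm (x $ j)"
proof -
  have "Max (range (\<lambda>j. onorm (x $ j))) \<in> range (\<lambda>j. onorm (x $ j))"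
    by (rule Max_in) auto
  then show ?thesis unfolding mnorm_def by (metis rangeE)
qed

lemma onorm_component_le_mnorm: "onorm (x $ j) \<le> mnorm x"
  unfolding mnorm_def by (simp add: Max_ge)

lemma mnorm_add_le: "mnorm (a + b) \<le> mnorm a + mnorm b"
proof -
  obtain j where "mnorm (a + b) = onorm (a $ j + b $ j)"
    using mnorm_attained[of "a + b"] by auto
  also have "\<dots> \<le> onorm (a $ j) + onorm (b $ j)"
    by (rule onorm_add_le)
  also have "\<dots> \<le> mnorm a + mnorm b"
    using onorm_component_le_mnorm[of a j] onorm_component_le_mnorm[of b j] by linarith
  finally show ?thesis .
qed

lemma mnorm_uminus: "mnorm (- a) = mnorm a"
  unfolding mnorm_def by (simp add: onorm_uminus)

lemma pdist_commute: "pdist x y = pdist y x"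
  unfolding pdist_def by (metis mnorm_uminus minus_diff_eq)

lemma pdist_triangle: "pdist x z \<le> pdist x y + pdist y z"
  unfolding pdist_def using mnorm_add_le[of "x - y" "y - z"] by simp

lemma pdist_le_in_cube:
  assumes "x \<in> cube R c" and "y \<in> cube R c"
  shows "pdist x y \<le> 2 * R"
  using assms pdist_triangle[where x = x and y = c and z = y] pdist_commute[of y c]
  unfolding cube_def by simp

lemma sdiam_le:
  assumes "A \<noteq> {}" and "\<And>x y. x \<in> A \<Longrightarrow> y \<in> A \<Longrightarrow> pdist x y \<le> c"
  shows "sdiam A \<le> c"
  unfolding sdiam_def using assms by (intro cSUP_least) auto

lemma le_sdist:
  assumes "A \<noteq> {}" and "B \<noteq> {}" and "\<And>x y. x \<in> A \<Longrightarrow> y \<in> B \<Longrightarrow> c \<le> pdist x y"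
  shows "c \<le> sdist A B"
  unfolding sdist_def using assms by (intro cINF_greatest) auto

lemma rtrancl_path_diameter_bound:
  fixes d :: "'a \<Rightarrow> 'a \<Rightarrow> real" and A :: "'i \<Rightarrow> 'a set"
  assumes tri: "\<And>x y z. d x z \<le> d x y + d y z"
    and close: "\<And>i j. r i j \<Longrightarrow> \<exists>x\<in>A i. \<exists>y\<in>A j. d x y < \<delta>"
    and path: "rtrancl_path r a xs b"
    and diam: "\<forall>j\<in>set (a # xs). \<forall>x\<in>A j. \<forall>y\<in>A j. d x y \<le> \<delta>"
  shows "\<forall>x\<in>A a. \<forall>y\<in>A b. d x y \<le> (2 * real (length xs) + 1) * \<delta>"
  using path diam
proof (induction rule: rtrancl_path.induct)
  case (base a)
  then show ?case by simp
next
  case (step a c ys b)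
  obtain p q where pq: "p \<in> A a" "q \<in> A c" "d p q < \<delta>"
    using close[OF step.hyps(1)] by blast
  show ?case
  proof (intro ballI)
    fix x y assume x: "x \<in> A a" and y: "y \<in> A b"
    have "d x y \<le> d x p + d p q + d q y"
      using tri[where x = x and y = p and z = y] tri[where x = p and y = q and z = y] by linarith
    moreover have "d x p \<le> \<delta>"
      using step.prems x pq(1) by simp
    moreover have "d q y \<le> (2 * real (length ys) + 1) * \<delta>"
      using step.IH step.prems pq(2) y by simp
    ultimately show "d x y \<le> (2 * real (length (c # ys)) + 1) * \<delta>"
      using pq(3) by (simp add: algebra_simps)
  qed
qed

text \<open>A chain of linked sets can be shortened to one visiting each index at most once, which
  bounds the number of links by the number of indices.\<close>

lemma rtranclp_diameter_bound:
  fixes d :: "'a \<Rightarrow> 'a \<Rightarrow> real" and A :: "'i \<Rightarrow> 'a set"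
  assumes tri: "\<And>x y z. d x z \<le> d x y + d y z"
    and "finite S" and "0 \<le> \<delta>"
    and diam: "\<And>j x y. j \<in> S \<Longrightarrow> x \<in> A j \<Longrightarrow> y \<in> A j \<Longrightarrow> d x y \<le> \<delta>"
    and link: "\<And>i j. r i j \<Longrightarrow> j \<in> S \<and> (\<exists>x\<in>A i. \<exists>y\<in>A j. d x y < \<delta>)"
    and "r\<^sup>*\<^sup>* a b" and "a \<in> S" and "x \<in> A a" and "y \<in> A b"
  shows "d x y \<le> (2 * real (card S) - 1) * \<delta>"
proof -
  obtain xs where path: "rtrancl_path r a xs b" and "distinct (a # xs)"
    using \<open>r\<^sup>*\<^sup>* a b\<close> rtrancl_path_distinct by (metis rtranclp_eq_rtrancl_path)
  have "set (a # xs) \<subseteq> S"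
    using \<open>a \<in> S\<close> rtrancl_path_Range[OF path] link by auto
  then have "length (a # xs) \<le> card S"
    using \<open>distinct (a # xs)\<close> \<open>finite S\<close> by (metis card_mono distinct_card)
  then have len: "2 * real (length xs) + 1 \<le> 2 * real (card S) - 1"
    by simp
  have "d x y \<le> (2 * real (length xs) + 1) * \<delta>"
    using rtrancl_path_diameter_bound[where d = d and A = A and \<delta> = \<delta>, OF tri _ path]
      \<open>set (a # xs) \<subseteq> S\<close> diam link \<open>x \<in> A a\<close> \<open>y \<in> A b\<close> by blast
  also have "\<dots> \<le> (2 * real (card S) - 1) * \<delta>"
    using len \<open>0 \<le> \<delta>\<close> by (rule mult_right_mono)
  finally show ?thesis .
qed

lemma exists_separated_clusters:
  fixes d :: "'a \<Rightarrow> 'a \<Rightarrow> real" and A :: "'i \<Rightarrow> 'a set"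
  assumes sym: "\<And>x y. d x y = d y x"
    and tri: "\<And>x y z. d x z \<le> d x y + d y z"
    and "finite S" and "0 \<le> \<delta>"
    and diam: "\<And>j x y. j \<in> S \<Longrightarrow> x \<in> A j \<Longrightarrow> y \<in> A j \<Longrightarrow> d x y \<le> \<delta>"
  obtains \<C> where "finite \<C>" and "\<Union>\<C> = (\<Union>j\<in>S. A j)" and "\<forall>\<Omega>\<in>\<C>. \<Omega> \<noteq> {}"
    and "\<forall>\<Omega>\<in>\<C>. \<forall>x\<in>\<Omega>. \<forall>y\<in>\<Omega>. d x y \<le> (2 * real (card S) - 1) * \<delta>"
    and "\<forall>\<Omega>\<in>\<C>. \<forall>\<Omega>'\<in>\<C>. \<Omega> \<noteq> \<Omega>' \<longrightarrow> (\<forall>x\<in>\<Omega>. \<forall>y\<in>\<Omega>'. \<delta> \<le> d x y)"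
proof -
  \<comment> \<open>Empty sets are discarded, otherwise each would form an empty cluster of its own.\<close>
  define I where "I = {j \<in> S. A j \<noteq> {}}"
  define r where "r i j \<longleftrightarrow> i \<in> I \<and> j \<in> I \<and> (\<exists>x\<in>A i. \<exists>y\<in>A j. d x y < \<delta>)" for i j
  define cluster where "cluster i = (\<Union>j\<in>{j. r\<^sup>*\<^sup>* i j}. A j)" for i
  have r_link: "r i j \<Longrightarrow> j \<in> S \<and> (\<exists>x\<in>A i. \<exists>y\<in>A j. d x y < \<delta>)" for i j
    unfolding r_def I_def by simp
  have "symp r"
    unfolding r_def symp_def using sym by metis
  then have r_sym: "r\<^sup>*\<^sup>* i j \<Longrightarrow> r\<^sup>*\<^sup>* j i" for i j
    by (meson sympD symp_rtranclp)
  have reach_I: "r\<^sup>*\<^sup>* i j \<Longrightarrow> i \<in> I \<Longrightarrow> j \<in> I" for i j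
    by (induction rule: rtranclp_induct) (auto simp: r_def)
  have cluster_diam: "d x y \<le> (2 * real (card S) - 1) * \<delta>"
    if "i \<in> I" and xy: "x \<in> cluster i" "y \<in> cluster i" for x y i
  proof -
    obtain a b where ia: "r\<^sup>*\<^sup>* i a" and ib: "r\<^sup>*\<^sup>* i b" and "x \<in> A a" "y \<in> A b"
      using xy unfolding cluster_def by auto
    have ab: "r\<^sup>*\<^sup>* a b"
      using rtranclp_trans[OF r_sym[OF ia] ib] .
    have "a \<in> S"
      using reach_I[OF ia \<open>i \<in> I\<close>] unfolding I_def by simp
    show ?thesis
      by (rule rtranclp_diameter_bound[where r = r and A = A and S = S and a = a and b = b])
        (fact tri \<open>finite S\<close> \<open>0 \<le> \<delta>\<close> diam r_link ab \<open>a \<in> S\<close> \<open>x \<in> A a\<close> \<open>y \<in> A b\<close>)+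
  qed
  have cluster_separated: "\<delta> \<le> d x y"
    if "i \<in> I" "i' \<in> I" "cluster i \<noteq> cluster i'" and xy: "x \<in> cluster i" "y \<in> cluster i'"
    for x y i i'
  proof (rule ccontr)
    assume "\<not> \<delta> \<le> d x y"
    obtain a b where ia: "r\<^sup>*\<^sup>* i a" and ib: "r\<^sup>*\<^sup>* i' b" and "x \<in> A a" "y \<in> A b"
      using xy unfolding cluster_def by auto
    then have "r a b"
      using reach_I[OF ia \<open>i \<in> I\<close>] reach_I[OF ib \<open>i' \<in> I\<close>] \<open>\<not> \<delta> \<le> d x y\<close>
      unfolding r_def by force
    then have "r\<^sup>*\<^sup>* i i'"
      using ia r_sym[OF ib] by (meson rtranclp.rtrancl_into_rtrancl rtranclp_trans)
    moreover from this have "r\<^sup>*\<^sup>* i' i"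
      by (rule r_sym)
    ultimately have "r\<^sup>*\<^sup>* i = r\<^sup>*\<^sup>* i'"
      by (intro ext) (meson rtranclp_trans)
    then have "cluster i = cluster i'"
      unfolding cluster_def by simp
    with \<open>cluster i \<noteq> cluster i'\<close> show False ..
  qed
  show ?thesis
  proof (rule that[of "cluster ` I"])
    show "finite (cluster ` I)"
      using \<open>finite S\<close> unfolding I_def by simp
    show "\<Union>(cluster ` I) = (\<Union>j\<in>S. A j)"
      using reach_I unfolding cluster_def I_def by blast
    show "\<forall>\<Omega>\<in>cluster ` I. \<Omega> \<noteq> {}"
      unfolding cluster_def I_def by force
    show "\<forall>\<Omega>\<in>cluster ` I. \<forall>x\<in>\<Omega>. \<forall>y\<in>\<Omega>. d x y \<le> (2 * real (card S) - 1) * \<delta>"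
      using cluster_diam by blast
    show "\<forall>\<Omega>\<in>cluster ` I. \<forall>\<Omega>'\<in>cluster ` I. \<Omega> \<noteq> \<Omega>' \<longrightarrow> (\<forall>x\<in>\<Omega>. \<forall>y\<in>\<Omega>'. \<delta> \<le> d x y)"
      using cluster_separated by blast
  qed
qed

lemma cluster_decomposition:
  fixes A :: "'i \<Rightarrow> ('d::finite, 'n::finite) pt set"
  assumes "finite S" and "0 \<le> \<delta>"
    and diam: "\<And>j x y. j \<in> S \<Longrightarrow> x \<in> A j \<Longrightarrow> y \<in> A j \<Longrightarrow> pdist x y \<le> \<delta>"
  obtains K :: nat and \<Omega> :: "nat \<Rightarrow> ('d, 'n) pt set"
  where "(\<Union>j<K. \<Omega> j) = (\<Union>j\<in>S. A j)" and "\<forall>j<K. \<Omega> j \<noteq> {}"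
    and "\<forall>j<K. sdiam (\<Omega> j) \<le> (2 * real (card S) - 1) * \<delta>"
    and "\<forall>j<K. \<forall>j'<K. j \<noteq> j' \<longrightarrow> \<delta> \<le> sdist (\<Omega> j) (\<Omega> j')"
proof -
  obtain \<C> where "finite \<C>" and cover: "\<Union>\<C> = (\<Union>j\<in>S. A j)"
    and nonempty: "\<forall>\<Omega>\<in>\<C>. \<Omega> \<noteq> {}"
    and small: "\<forall>\<Omega>\<in>\<C>. \<forall>x\<in>\<Omega>. \<forall>y\<in>\<Omega>. pdist x y \<le> (2 * real (card S) - 1) * \<delta>"
    and separated: "\<forall>\<Omega>\<in>\<C>. \<forall>\<Omega>'\<in>\<C>. \<Omega> \<noteq> \<Omega>' \<longrightarrow> (\<forall>x\<in>\<Omega>. \<forall>y\<in>\<Omega>'. \<delta> \<le> pdist x y)"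
    by (rule exists_separated_clusters[OF pdist_commute pdist_triangle \<open>finite S\<close> \<open>0 \<le> \<delta>\<close> diam])
  obtain \<Omega> where \<Omega>: "bij_betw \<Omega> {..<card \<C>} \<C>"
    using ex_bij_betw_nat_finite[OF \<open>finite \<C>\<close>] by (auto simp: atLeast0LessThan)
  then have \<Omega>_in: "\<Omega> j \<in> \<C>" if "j < card \<C>" for j
    using that by (auto dest: bij_betwE)
  show ?thesis
  proof (rule that[of \<Omega> "card \<C>"])
    show "(\<Union>j<card \<C>. \<Omega> j) = (\<Union>j\<in>S. A j)"
      using \<Omega> cover unfolding bij_betw_def by simp
    show "\<forall>j<card \<C>. \<Omega> j \<noteq> {}"
      using \<Omega>_in nonempty by blast
    show "\<forall>j<card \<C>. sdiam (\<Omega> j) \<le> (2 * real (card S) - 1) * \<delta>"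
    proof (intro allI impI)
      fix j assume "j < card \<C>"
      then show "sdiam (\<Omega> j) \<le> (2 * real (card S) - 1) * \<delta>"
        using \<Omega>_in[OF \<open>j < card \<C>\<close>] nonempty small by (intro sdiam_le) auto
    qed
    show "\<forall>j<card \<C>. \<forall>j'<card \<C>. j \<noteq> j' \<longrightarrow> \<delta> \<le> sdist (\<Omega> j) (\<Omega> j')"
    proof (intro allI impI)
      fix j j' assume "j < card \<C>" "j' < card \<C>" "j \<noteq> j'"
      then have "\<Omega> j \<noteq> \<Omega> j'"
        using \<Omega> unfolding bij_betw_def inj_on_def by auto
      then show "\<delta> \<le> sdist (\<Omega> j) (\<Omega> j')"
        using \<Omega>_in[OF \<open>j < card \<C>\<close>] \<Omega>_in[OF \<open>j' < card \<C>\<close>] nonempty separated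
        by (intro le_sdist) auto
    qed
  qed
qed

theorem lemma7p4:
  fixes u :: "((int, 'd::finite) vec, 'n::{finite,linorder}) vec"
    and g r r0 C0 tau s0 rn E Ct l L :: real
    and U :: "int ^ 'd \<Rightarrow> int ^ 'd \<Rightarrow> real" and V :: "int ^ 'd \<Rightarrow> real"
    and N J :: nat
    and k :: "nat \<Rightarrow> ((int, 'd) vec, 'n) vec"
  assumes "card (UNIV :: 'n set) \<le> N"
    and "g \<noteq> 0" and "r > 0"
    and "\<exists>M. \<forall>x y. \<bar>U x y\<bar> \<le> M"
    and "\<forall>x y. U x y = U y x"
    and "\<forall>x y. onorm (x - y) \<ge> r0 \<longrightarrow> U x y = 0"
    and "C0 > 0" and "tau \<ge> 0"
    and "real (card (UNIV :: 'n set) * card (UNIV :: 'd set)) / 2 < s0" and "s0 \<le> rn"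
    and "rn < r - real (card (UNIV :: 'n set) * card (UNIV :: 'd set)) / 2"
    and "Ct > 0" and "l \<ge> 1" and "L \<ge> 1"
    and "\<forall>v. (\<forall>j\<in>{1..J}. v \<notin> cube (Ct * l) (k j)) \<longrightarrow> NS g r U V C0 tau s0 rn E l v"
    and "l > 2 * Ct"
  shows "\<exists>B G (K::nat) (\<Omega>::nat \<Rightarrow> (((int, 'd) vec, 'n) vec) set).
           cube L u = B \<union> G \<and> B \<inter> G = {} \<and>
           B = (\<Union>j<K. \<Omega> j) \<and>
           (\<forall>j<K. \<Omega> j \<noteq> {} \<and> sdiam (\<Omega> j) \<le> (2 * real J + 1) * l\<^sup>2) \<and>
           (\<forall>j<K. \<forall>j'<K. j \<noteq> j' \<longrightarrow> sdist (\<Omega> j) (\<Omega> j') \<ge> l\<^sup>2) \<and>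
           (\<forall>v\<in>G. NS g r U V C0 tau s0 rn E l v)"
proof -
  let ?A = "\<lambda>j. cube L u \<inter> cube (Ct * l) (k j)"
  have "2 * (Ct * l) \<le> l\<^sup>2"
    using \<open>l > 2 * Ct\<close> \<open>l \<ge> 1\<close> by (simp add: power2_eq_square mult_right_mono)
  then have diam: "pdist x y \<le> l\<^sup>2" if "j \<in> {1..J}" "x \<in> ?A j" "y \<in> ?A j" for j x y
    using that pdist_le_in_cube[of x "Ct * l" "k j" y] by auto
  obtain K :: nat and \<Omega> where cover: "(\<Union>j<K. \<Omega> j) = (\<Union>j\<in>{1..J}. ?A j)"
    and nonempty: "\<forall>j<K. \<Omega> j \<noteq> {}"
    and small: "\<forall>j<K. sdiam (\<Omega> j) \<le> (2 * real (card {1..J}) - 1) * l\<^sup>2"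
    and separated: "\<forall>j<K. \<forall>j'<K. j \<noteq> j' \<longrightarrow> l\<^sup>2 \<le> sdist (\<Omega> j) (\<Omega> j')"
    by (rule cluster_decomposition[OF finite_atLeastAtMost zero_le_power2 diam])
  have slack: "(2 * real (card {1..J}) - 1) * l\<^sup>2 \<le> (2 * real J + 1) * l\<^sup>2"
    by (simp add: mult_right_mono)
  have bounded: "\<forall>j<K. \<Omega> j \<noteq> {} \<and> sdiam (\<Omega> j) \<le> (2 * real J + 1) * l\<^sup>2"
    using nonempty small slack by (meson order_trans)
  define B where "B = (\<Union>j<K. \<Omega> j)"
  show ?thesis
  proof (rule exI[of _ B], rule exI[of _ "cube L u - B"], rule exI[of _ K], rule exI[of _ \<Omega>],
      intro conjI)
    show "cube L u = B \<union> (cube L u - B)"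
      using cover unfolding B_def by auto
    show "\<forall>v\<in>cube L u - B. NS g r U V C0 tau s0 rn E l v"
    proof
      fix v assume "v \<in> cube L u - B"
      then have "\<forall>j\<in>{1..J}. v \<notin> cube (Ct * l) (k j)"
        using cover unfolding B_def by auto
      then show "NS g r U V C0 tau s0 rn E l v"
        using assms(15) by simp
    qed
    show "B \<inter> (cube L u - B) = {}"
      by blast
  qed (fact B_def bounded separated)+
qed

end
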